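(* For every integer $n\ge0$, \[ \sum_{k=0}^{n}\sum_{p=0}^{n-k}\frac{\ln^p2}{p!}\operatorname{Li}_{n-k+2-p,\{1\}_k}\!\left(\tfrac12\right)=\frac{1-2^{n+1}}{(n+2)!}\ln^{n+2}2+\frac12\sum_{k=0}^{n}\zeta(n-k+2,\{1\}_k). \]
   Context: Multiple zeta values: $\zeta(s_1,\dots,s_l):=\sum_{n_1>\cdots>n_l>0}n_1^{-s_1}\cdots n_l^{-s_l}$ ($s_1\ge2$). Multiple polylogarithm: $\operatorname{Li}_{s_1,\dots,s_l}(z):=\sum_{n_1>n_2>\cdots>n_l>0}\frac{z^{n_1}}{n_1^{s_1}\cdots n_l^{s_l}}$. The notation $\{1\}_k$ denotes the string $1,1,\dots,1$ ($k$ times); for $k=0$ it is empty. *)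

theory Defs
  imports "HOL-Analysis.Analysis"
begin

definition mz_indices :: "nat \<Rightarrow> nat list set" where
  "mz_indices l = {ns. length ns = l \<and> sorted_wrt (>) ns \<and> (\<forall>n\<in>set ns. n > 0)}"

definition mpolylog :: "nat list \<Rightarrow> real \<Rightarrow> real" where
  "mpolylog s z = (\<Sum>\<^sub>\<infinity>ns\<in>mz_indices (length s).
      z ^ hd ns / (\<Prod>i<length s. real (ns ! i) ^ (s ! i)))"

definition mzeta :: "nat list \<Rightarrow> real" where
  "mzeta s = (\<Sum>\<^sub>\<infinity>ns\<in>mz_indices (length s).
      1 / (\<Prod>i<length s. real (ns ! i) ^ (s ! i)))"

end

theory Submission
  imports Defs "HOL-Real_Asymp.Real_Asymp"
begin

(* Write Li_{m,{1}_k}(z) = sum_N S_k(N) / N^m z^N, where S_k(N) = sum_{N > j_1 > ... > j_k > 0}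
   1/(j_1...j_k) is a truncated multiple harmonic sum.  The bound S_k(N) <= (1 + ln N)^k makes the
   series converge on [-1, 1] for m >= 2, where it agrees with mpolylog and (at z = 1) with mzeta.
   Termwise differentiation gives z Li'_{m+1,{1}_k} = Li_{m,{1}_k} and the closed form
   Li_{1,{1}_k}(z) = (-ln(1-z))^(k+1) / (k+1)!.

   For A(z) = sum_k sum_p (-ln z)^p / p! Li_{n-k+2-p,{1}_k}(z) the derivative telescopes to
   ((a+b)^(n+1) - a^(n+1)) / ((n+1)! z) with a = -ln z, b = -ln(1-z).  Consequently
   A(z) + A(1-z) - c(z), with c(z) = (a^(n+2) + b^(n+2) - (a+b)^(n+2)) / (n+2)!, is constant on
   (0, 1); letting z -> 0+ identifies the constant as sum_k zeta(n-k+2, {1}_k).  Evaluating at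
   z = 1/2, where a = b = ln 2, gives the theorem. *)

(* Truncated multiple harmonic sums S_k(N) = sum over N > j_1 > ... > j_k > 0 of 1/(j_1...j_k),
   defined by recursion on k (the term j = 0 vanishes because 1/0 = 0 in HOL). *)
fun mhs :: "nat \<Rightarrow> nat \<Rightarrow> real" where
  "mhs 0 N = 1"
| "mhs (Suc k) N = (\<Sum>j<N. mhs k j / real j)"

definition desc_tuples :: "nat \<Rightarrow> nat \<Rightarrow> nat list set" where
  "desc_tuples k N = {ns \<in> mz_indices k. \<forall>x\<in>set ns. x < N}"

definition recip_prod :: "nat list \<Rightarrow> real" where
  "recip_prod ns = 1 / (\<Prod>i<length ns. real (ns ! i))"

lemma finite_desc_tuples: "finite (desc_tuples k N)"
  by (rule finite_subset[OF _ finite_lists_length_eq[of "{..<N}" k]])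
     (auto simp: desc_tuples_def mz_indices_def)

lemma recip_prod_Cons: "recip_prod (j # ns) = 1 / real j * recip_prod ns"
  unfolding recip_prod_def length_Cons prod.lessThan_Suc_shift by simp

(* Splitting off the leading index: a tuple n_1 > ... > n_{k+1} > 0 is n_1 followed by a
   tuple below n_1.  This is how the defining sums of mpolylog and mzeta become power series. *)
lemma mz_indices_Suc:
  "mz_indices (Suc k) = (\<lambda>(j, ns). j # ns) ` (SIGMA j:{0<..}. desc_tuples k j)"
proof (intro set_eqI iffI)
  fix xs assume "xs \<in> mz_indices (Suc k)"
  then obtain j ns where "xs = j # ns" "j # ns \<in> mz_indices (Suc k)"
    by (cases xs) (auto simp: mz_indices_def)
  then show "xs \<in> (\<lambda>(j, ns). j # ns) ` (SIGMA j:{0<..}. desc_tuples k j)"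
    by (auto simp: mz_indices_def desc_tuples_def intro!: image_eqI[of _ _ "(j, ns)"])
qed (auto simp: mz_indices_def desc_tuples_def)

lemma desc_tuples_Suc:
  "desc_tuples (Suc k) N = (\<lambda>(j, ns). j # ns) ` (SIGMA j:{0<..<N}. desc_tuples k j)"
  by (auto simp: desc_tuples_def mz_indices_Suc) (meson less_trans)

lemma mhs_eq_sum_desc_tuples: "mhs k N = (\<Sum>ns\<in>desc_tuples k N. recip_prod ns)"
proof (induction k arbitrary: N)
  case 0
  have "desc_tuples 0 N = {[]}" by (auto simp: desc_tuples_def mz_indices_def)
  then show ?case by (simp add: recip_prod_def)
next
  case (Suc k)
  have "(\<Sum>ns\<in>desc_tuples (Suc k) N. recip_prod ns)
      = (\<Sum>(j, ns)\<in>(SIGMA j:{0<..<N}. desc_tuples k j). recip_prod (j # ns))"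
    unfolding desc_tuples_Suc by (subst sum.reindex) (auto simp: inj_on_def case_prod_unfold)
  also have "\<dots> = (\<Sum>j\<in>{0<..<N}. mhs k j / real j)"
    by (subst sum.Sigma[symmetric])
       (auto simp: finite_desc_tuples recip_prod_Cons Suc sum_divide_distrib)
  also have "\<dots> = mhs (Suc k) N"
    by (simp, rule sum.mono_neutral_left) auto
  finally show ?case ..
qed

lemma mhs_nonneg: "mhs k N \<ge> 0"
  by (induction k arbitrary: N) (auto intro!: sum_nonneg divide_nonneg_nonneg)

lemma mhs_mono: "N \<le> N' \<Longrightarrow> mhs k N \<le> mhs k N'"
  by (cases k) (auto intro!: sum_mono2 divide_nonneg_nonneg mhs_nonneg)

(* Growth of S_k(N): each level of the recursion costs at most one harmonic number, and
   H_N <= 1 + ln N, so S_k(N) <= (1 + ln N)^k. *)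
lemma sum_inverse_le_harm: "(\<Sum>j<N. 1 / real j) \<le> harm N"
proof (cases N)
  case (Suc M)
  have "(\<Sum>j<N. 1 / real j) = harm M"
    unfolding Suc sum.lessThan_Suc_shift harm_altdef by (simp add: divide_inverse)
  also have "\<dots> \<le> harm N" using Suc by (intro harm_mono) simp
  finally show ?thesis .
qed (simp add: harm_def)

lemma mhs_le_harm_power: "mhs k N \<le> harm N ^ k"
proof (induction k)
  case (Suc k)
  have "mhs (Suc k) N \<le> (\<Sum>j<N. mhs k N * (1 / real j))"
    by (simp, intro sum_mono) (auto intro!: divide_right_mono mhs_mono simp: divide_simps)
  also have "\<dots> \<le> harm N ^ k * harm N"
    by (simp only: sum_distrib_left[symmetric])
       (intro mult_mono Suc.IH sum_inverse_le_harm mhs_nonneg zero_le_power harm_nonneg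
              sum_nonneg, simp)
  finally show ?case by (simp add: mult.commute)
qed simp

(* H_n - ln n decreases and equals 1 for n = 1. *)
lemma harm_le_one_plus_ln: "n \<ge> 1 \<Longrightarrow> harm n \<le> 1 + ln (real n)"
  using decseq_harm_diff_ln[unfolded decseq_def, rule_format, of 0 "n - 1"]
  by (simp add: harm_def)

lemma mhs_le_ln_power: "N \<ge> 1 \<Longrightarrow> mhs k N \<le> (1 + ln (real N)) ^ k"
  by (rule order.trans[OF mhs_le_harm_power power_mono[OF harm_le_one_plus_ln harm_nonneg]])

(* The series Li_{m,{1}_k}(z) = sum_N S_k(N) / N^m * z^N, written li_coeff m k N * z^N. *)
definition li_coeff :: "nat \<Rightarrow> nat \<Rightarrow> nat \<Rightarrow> real" where
  "li_coeff m k N = mhs k N / real N ^ m"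

definition Li_ones :: "nat \<Rightarrow> nat \<Rightarrow> real \<Rightarrow> real" where
  "Li_ones m k z = (\<Sum>N. li_coeff m k N * z ^ N)"

lemma li_coeff_at_0: "m \<ge> 1 \<Longrightarrow> li_coeff m k 0 = 0"
  by (simp add: li_coeff_def)

lemma li_coeff_nonneg: "li_coeff m k N \<ge> 0"
  by (simp add: li_coeff_def mhs_nonneg)

lemma li_coeff_antimono:
  assumes "m' \<le> m" "1 \<le> m'" shows "li_coeff m k N \<le> li_coeff m' k N"
proof (cases "N = 0")
  case False
  then show ?thesis
    unfolding li_coeff_def using assms by (auto intro!: divide_left_mono mhs_nonneg power_increasing)
qed (use assms in \<open>simp add: li_coeff_at_0\<close>)

lemma li_coeff_le:
  assumes "m \<ge> 1" shows "li_coeff m k N \<le> (1 + ln (real N)) ^ k / real N ^ m"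
proof (cases "N = 0")
  case False
  then show ?thesis unfolding li_coeff_def by (auto intro!: divide_right_mono mhs_le_ln_power)
qed (use assms in \<open>simp add: li_coeff_at_0\<close>)

(* For m >= 2 the coefficients are O(N^(-3/2)) by the logarithmic growth bound, so the
   series converges absolutely on the closed interval [-1, 1]. *)
lemma summable_li_coeff:
  assumes "m \<ge> 2" shows "summable (li_coeff m k)"
proof -
  have "(\<lambda>N. (1 + ln (real N)) ^ k / real N ^ 2) \<in> O(\<lambda>N. real N powr (-3/2))"
    by real_asymp
  then have "summable (\<lambda>N. (1 + ln (real N)) ^ k / real N ^ 2)"
    by (rule summable_comparison_test_bigo[rotated]) (simp add: summable_real_powr_iff)
  moreover have "norm (li_coeff m k N) \<le> (1 + ln (real N)) ^ k / real N ^ 2" for N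
    using li_coeff_antimono[OF assms, of k N] li_coeff_le[of 2 k N] li_coeff_nonneg by simp
  ultimately show ?thesis
    by (rule summable_comparison_test'[where N = 0])
qed

(* For m >= 1 the coefficients are bounded, so the series converges inside the unit disc. *)
lemma summable_Li_ones:
  assumes "m \<ge> 1" "\<bar>z\<bar> < 1" shows "summable (\<lambda>N. li_coeff m k N * z ^ N)"
proof -
  have "(\<lambda>N. (1 + ln (real N)) ^ k / real N) \<in> O(\<lambda>N. 1)"
    by real_asymp
  then have "(\<lambda>N. (1 + ln (real N)) ^ k / real N * \<bar>z\<bar> ^ N) \<in> O(\<lambda>N. 1 * \<bar>z\<bar> ^ N)"
    by (rule landau_o.big.mult_right)
  then have "summable (\<lambda>N. (1 + ln (real N)) ^ k / real N * \<bar>z\<bar> ^ N)"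
    by (rule summable_comparison_test_bigo[rotated]) (use assms in simp)
  moreover have "norm (li_coeff m k N * z ^ N) \<le> (1 + ln (real N)) ^ k / real N * \<bar>z\<bar> ^ N" for N
  proof -
    have "li_coeff m k N \<le> (1 + ln (real N)) ^ k / real N"
      using li_coeff_antimono[OF assms(1) order.refl, of k N] li_coeff_le[of 1 k N] by simp
    then show ?thesis
      using li_coeff_nonneg[of m k N]
      by (simp add: abs_mult power_abs mult_right_mono del: times_divide_eq_left)
  qed
  ultimately show ?thesis
    by (rule summable_comparison_test'[where N = 0])
qed

lemma summable_Li_ones_closed:
  assumes "m \<ge> 2" "\<bar>z\<bar> \<le> 1" shows "summable (\<lambda>N. li_coeff m k N * z ^ N)"
  by (rule summable_comparison_test'[where N = 0, OF summable_li_coeff[OF assms(1)]])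
     (use assms(2) li_coeff_nonneg in \<open>auto simp: abs_mult power_abs intro!: mult_left_le power_le_one\<close>)

lemma has_sum_Sigma_nonneg:
  fixes f :: "'a \<times> 'b \<Rightarrow> real"
  assumes "\<And>x. x \<in> A \<Longrightarrow> ((\<lambda>y. f (x, y)) has_sum g x) (B x)" and "(g has_sum S) A"
    and "\<And>x y. x \<in> A \<Longrightarrow> y \<in> B x \<Longrightarrow> 0 \<le> f (x, y)"
  shows "(f has_sum S) (Sigma A B)"
  using assms by (intro has_sum_SigmaI summable_on_SigmaI) (auto dest: has_sum_imp_summable)

(* On [0, 1] and for m >= 2 the multiple polylogarithm Li_{m,{1}_k}, defined as an unordered
   sum over index tuples, is the power series Li_ones m k; grouping by the leading index n_1
   produces exactly the coefficient S_k(n_1) / n_1^m. *)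
lemma mpolylog_eq_Li_ones:
  assumes m: "m \<ge> 2" and z: "0 \<le> z" "z \<le> 1"
  shows "mpolylog (m # replicate k 1) z = Li_ones m k z"
proof -
  define s where "s = m # replicate k (1::nat)"
  define g where "g ns = z ^ hd ns / (\<Prod>i<length s. real (ns ! i) ^ (s ! i))" for ns
  have prod: "(\<Prod>i<length s. real ((j # ns) ! i) ^ (s ! i)) = real j ^ m * (\<Prod>i<k. real (ns ! i))"
    for j ns unfolding s_def length_Cons length_replicate prod.lessThan_Suc_shift by simp
  have g_Cons: "g (j # ns) = z ^ j / real j ^ m * recip_prod ns" if "ns \<in> desc_tuples k j" for j ns
    using that by (simp add: g_def prod recip_prod_def desc_tuples_def mz_indices_def)
  have inner: "((\<lambda>ns. g (j # ns)) has_sum li_coeff m k j * z ^ j) (desc_tuples k j)" for j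
  proof -
    have "(\<Sum>ns\<in>desc_tuples k j. g (j # ns)) = z ^ j / real j ^ m * mhs k j"
      by (simp add: g_Cons mhs_eq_sum_desc_tuples sum_distrib_left)
    then show ?thesis
      using has_sum_finite[OF finite_desc_tuples, of "\<lambda>ns. g (j # ns)" k j]
      by (simp add: li_coeff_def mult.commute)
  qed
  have "((\<lambda>j. li_coeff m k j * z ^ j) has_sum Li_ones m k z) UNIV"
    unfolding Li_ones_def using summable_Li_ones_closed[OF m, of z k] z
    by (intro sums_nonneg_imp_has_sum) (auto intro!: mult_nonneg_nonneg li_coeff_nonneg)
  then have outer: "((\<lambda>j. li_coeff m k j * z ^ j) has_sum Li_ones m k z) {0<..}"
    by (rule has_sum_cong_neutral[THEN iffD1, rotated -1]) (use m in \<open>auto simp: li_coeff_at_0\<close>)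
  have "mpolylog s z = infsum g (mz_indices (Suc k))"
    unfolding mpolylog_def g_def by (simp add: s_def)
  also have "\<dots> = infsum (\<lambda>(j, ns). g (j # ns)) (SIGMA j:{0<..}. desc_tuples k j)"
    unfolding mz_indices_Suc by (subst infsum_reindex) (auto simp: inj_on_def comp_def case_prod_unfold)
  also have "\<dots> = Li_ones m k z"
    using z by (intro infsumI has_sum_Sigma_nonneg[OF _ outer])
      (auto simp: g_Cons recip_prod_def intro: inner intro!: divide_nonneg_nonneg mult_nonneg_nonneg prod_nonneg)
  finally show ?thesis by (simp add: s_def)
qed

lemma mzeta_eq_Li_ones: "m \<ge> 2 \<Longrightarrow> mzeta (m # replicate k 1) = Li_ones m k 1"
  using mpolylog_eq_Li_ones[of m 1 k] by (simp add: mzeta_def mpolylog_def)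

lemma Li_ones_has_deriv_series:
  assumes "m \<ge> 1" "\<bar>z\<bar> < 1"
  shows "(Li_ones m k has_field_derivative (\<Sum>n. diffs (li_coeff m k) n * z ^ n)) (at z)"
  unfolding Li_ones_def[abs_def]
  by (rule termdiffs_strong'[where K = 1]) (use assms summable_Li_ones in auto)

lemma diffs_li_coeff: "diffs (li_coeff (Suc m) k) n = li_coeff m k (Suc n)"
  unfolding diffs_def li_coeff_def power_Suc by (simp add: field_simps del: of_nat_Suc)

lemma Li_ones_deriv:
  assumes "m \<ge> 1" "\<bar>z\<bar> < 1" "z \<noteq> 0"
  shows "(Li_ones (Suc m) k has_field_derivative Li_ones m k z / z) (at z)"
proof -
  have "Li_ones m k z = (\<Sum>n. li_coeff m k (Suc n) * z ^ n) * z"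
    unfolding Li_ones_def using powser_split_head(1)[OF summable_Li_ones[OF assms(1,2)]] assms(1)
    by (simp add: li_coeff_at_0)
  then show ?thesis
    using Li_ones_has_deriv_series[of "Suc m" z k] assms by (simp add: diffs_li_coeff)
qed

(* For the bottom weight: (1 - z) d/dz Li_{1,{1}_k}(z) = Li_{1,{1}_(k-1)}(z) (resp. 1 for
   k = 0), because S_k(N + 1) - S_k(N) = S_(k-1)(N) / N. *)
lemma Li_one_deriv:
  assumes z: "\<bar>z\<bar> < 1"
  shows "(Li_ones 1 k has_field_derivative
           (if k = 0 then 1 else Li_ones 1 (k - 1) z) / (1 - z)) (at z)"
proof -
  define P where "P = (\<Sum>n. mhs k (Suc n) * z ^ n)"
  have diffs_eq: "diffs (li_coeff 1 k) n = mhs k (Suc n)" for n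
    using diffs_li_coeff[of 0 k n] by (simp add: li_coeff_def)
  have sum_P: "summable (\<lambda>n. mhs k (Suc n) * z ^ n)"
    using termdiff_converges[where K = 1 and c = "li_coeff 1 k", OF _ summable_Li_ones] z
    unfolding diffs_eq by simp
  have "(1 - z) * P = (if k = 0 then 1 else Li_ones 1 (k - 1) z)"
  proof (cases k)
    case 0
    then show ?thesis using z by (simp add: P_def suminf_geometric)
  next
    case (Suc j)
    have sum_shift: "summable (\<lambda>n. mhs k n * z ^ n)"
      using sum_P by (subst summable_powser_split_head[symmetric])
    have "(\<Sum>n. mhs k n * z ^ n) = z * P"
      using powser_split_head(1)[OF sum_shift] Suc by (simp add: P_def mult.commute)
    then have "(1 - z) * P = P - (\<Sum>n. mhs k n * z ^ n)"
      by (simp add: algebra_simps)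
    also have "\<dots> = (\<Sum>n. mhs k (Suc n) * z ^ n - mhs k n * z ^ n)"
      unfolding P_def by (simp add: suminf_diff[OF sum_P sum_shift])
    also have "\<dots> = Li_ones 1 j z"
      by (simp add: Li_ones_def li_coeff_def Suc left_diff_distrib[symmetric])
    finally show ?thesis using Suc by simp
  qed
  then have "P = (if k = 0 then 1 else Li_ones 1 (k - 1) z) / (1 - z)"
    using z by (simp add: field_simps)
  then show ?thesis
    using Li_ones_has_deriv_series[of 1 z k] z unfolding diffs_eq P_def by simp
qed

lemma power_over_fact_deriv:
  fixes f :: "real \<Rightarrow> real"
  assumes "(f has_field_derivative f') (at z)"
  shows "((\<lambda>z. f z ^ Suc p / fact (Suc p)) has_field_derivative f z ^ p / fact p * f') (at z)"
proof -
  have "((\<lambda>z. f z ^ Suc p / fact (Suc p)) has_field_derivative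
          (1 + real p) * (f' * f z ^ p) / fact (Suc p)) (at z)"
    by (intro DERIV_cdivide DERIV_power_Suc assms)
  moreover have "(1 + real p) * (f' * f z ^ p) / fact (Suc p) = f z ^ p / fact p * f'"
    by (simp add: fact_Suc field_simps del: of_nat_Suc) (simp add: algebra_simps)
  ultimately show ?thesis by (rule DERIV_cong)
qed

lemma Li_ones_at_0: "m \<ge> 1 \<Longrightarrow> Li_ones m k 0 = 0"
  by (simp add: Li_ones_def li_coeff_at_0)

(* ODE uniqueness step: if Li_{1,{1}_k} has the same derivative as (-ln(1-z))^(k+1) / (k+1)!
   on the unit disc, the two agree there, since both vanish at 0.  By induction on k
   (via Li_one_deriv) this yields the closed form of Li_{1,{1}_k}. *)
lemma Li_one_eq_by_deriv:
  assumes deriv: "\<And>z. \<bar>z\<bar> < 1 \<Longrightarrow>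
      (Li_ones 1 k has_field_derivative (- ln (1 - z)) ^ k / fact k / (1 - z)) (at z)"
    and z: "\<bar>z\<bar> < 1"
  shows "Li_ones 1 k z = (- ln (1 - z)) ^ Suc k / fact (Suc k)"
proof -
  define F where "F z = Li_ones 1 k z - (- ln (1 - z)) ^ Suc k / fact (Suc k)" for z
  have "(F has_field_derivative 0) (at x within ball 0 1)" if "x \<in> ball 0 1" for x
  proof -
    have x: "\<bar>x\<bar> < 1" using that by simp
    have "((\<lambda>z. - ln (1 - z)) has_field_derivative 1 / (1 - x)) (at x)"
      using x by (auto intro!: derivative_eq_intros simp: field_simps)
    from power_over_fact_deriv[OF this, of k]
    have "(F has_field_derivative (- ln (1 - x)) ^ k / fact k / (1 - x)
                                 - (- ln (1 - x)) ^ k / fact k * (1 / (1 - x))) (at x)"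
      unfolding F_def[abs_def] by (intro DERIV_diff deriv x)
    then show ?thesis by (simp add: has_field_derivative_at_within)
  qed
  then obtain c where "\<And>x. x \<in> ball 0 1 \<Longrightarrow> F x = c"
    using has_field_derivative_zero_constant[of "ball 0 1" F] by auto
  from this[of z] this[of 0] z have "F z = F 0" by simp
  then show ?thesis by (simp add: F_def Li_ones_at_0)
qed

lemma Li_one_closed_form:
  "\<bar>z\<bar> < 1 \<Longrightarrow> Li_ones 1 k z = (- ln (1 - z)) ^ Suc k / fact (Suc k)"
proof (induction k arbitrary: z)
  case 0
  show ?case using Li_one_deriv[of _ 0] by (intro Li_one_eq_by_deriv 0) simp
next
  case (Suc k)
  show ?case using Li_one_deriv[of _ "Suc k"] Suc.IH by (intro Li_one_eq_by_deriv Suc.prems) simp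
qed

lemma powser_bounds_unit_interval:
  fixes c :: "nat \<Rightarrow> real"
  assumes c: "c 0 = 0" "\<And>n. c n \<ge> 0" "summable c" and z: "0 \<le> z" "z \<le> 1"
  shows "0 \<le> (\<Sum>n. c n * z ^ n)" "(\<Sum>n. c n * z ^ n) \<le> z * (\<Sum>n. c n)"
proof -
  have le: "c n * z ^ n \<le> z * c n" for n
  proof (cases n)
    case (Suc n')
    then have "z ^ n \<le> z" using z by (simp add: power_le_one mult_left_le)
    then show ?thesis using c(2)[of n] by (metis mult.commute mult_left_mono)
  qed (simp add: c(1))
  have sum: "summable (\<lambda>n. c n * z ^ n)"
    by (rule summable_comparison_test'[where N = 0, OF c(3)])
       (use c(2) z in \<open>auto simp: abs_mult intro!: mult_left_le power_le_one\<close>)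
  show "0 \<le> (\<Sum>n. c n * z ^ n)"
    by (intro suminf_nonneg sum) (use c(2) z in simp)
  show "(\<Sum>n. c n * z ^ n) \<le> z * (\<Sum>n. c n)"
    using suminf_le[OF le sum summable_mult[OF c(3)]] by (simp add: suminf_mult c(3))
qed

lemma powser_continuous_on_unit_interval:
  fixes c :: "nat \<Rightarrow> real"
  assumes "summable (\<lambda>n. \<bar>c n\<bar>)"
  shows "continuous_on {-1..1} (\<lambda>z. \<Sum>n. c n * z ^ n)"
proof -
  have "uniform_limit {-1..1} (\<lambda>N z. \<Sum>n<N. c n * z ^ n) (\<lambda>z. \<Sum>n. c n * z ^ n) sequentially"
    by (rule Weierstrass_m_test[OF _ assms])
       (auto simp: abs_mult power_abs intro!: mult_left_le power_le_one)
  then show ?thesis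
    by (rule uniform_limit_theorem[rotated]) (auto intro!: continuous_intros eventuallyI)
qed

lemma Li_ones_bounds:
  assumes "m \<ge> 2" "0 \<le> z" "z \<le> 1"
  shows "0 \<le> Li_ones m k z" "Li_ones m k z \<le> z * Li_ones m k 1"
  using powser_bounds_unit_interval[of "li_coeff m k" z] assms
  by (auto simp: Li_ones_def li_coeff_at_0 li_coeff_nonneg summable_li_coeff)

lemma Li_ones_reflect_tendsto:
  assumes "m \<ge> 2"
  shows "((\<lambda>z. Li_ones m k (1 - z)) \<longlongrightarrow> Li_ones m k 1) (at_right 0)"
proof -
  have "continuous_on {-1..1} (Li_ones m k)"
    unfolding Li_ones_def[abs_def] using summable_li_coeff[OF assms]
    by (intro powser_continuous_on_unit_interval) (simp add: li_coeff_nonneg)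
  then have "continuous_on {0..1} (\<lambda>z. Li_ones m k (1 - z))"
    by (rule continuous_on_compose2) (auto intro!: continuous_intros)
  then have "((\<lambda>z. Li_ones m k (1 - z)) \<longlongrightarrow> Li_ones m k (1 - 0)) (at 0 within {0..1})"
    unfolding continuous_on_def by (metis atLeastAtMost_iff diff_zero order.refl zero_le_one)
  then show ?thesis by (simp add: at_within_Icc_at_right)
qed

lemma sum_telescope_shift:
  fixes g :: "nat \<Rightarrow> real"
  shows "(\<Sum>p=0..M. g p - (if p = 0 then 0 else g (p - 1))) = g M"
  by (induction M) auto

definition binom_tail :: "nat \<Rightarrow> real \<Rightarrow> real \<Rightarrow> real" where
  "binom_tail n a b = ((a + b) ^ Suc n - a ^ Suc n) / fact (Suc n)"

lemma binom_tail_eq_sum: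
  "binom_tail n a b = (\<Sum>k=0..n. a ^ (n - k) / fact (n - k) * (b ^ Suc k / fact (Suc k)))"
proof -
  have "(a + b) ^ Suc n / fact (Suc n)
      = (\<Sum>i\<le>Suc n. a ^ i / fact i * (b ^ (Suc n - i) / fact (Suc n - i)))"
    using exp_series_add_commuting[of a b "Suc n"] by (simp add: divide_inverse mult_ac)
  also have "\<dots> = (\<Sum>i=0..n. a ^ i / fact i * (b ^ (Suc n - i) / fact (Suc n - i)))
                  + a ^ Suc n / fact (Suc n)"
    by (simp add: atLeast0AtMost)
  also have "(\<Sum>i=0..n. a ^ i / fact i * (b ^ (Suc n - i) / fact (Suc n - i)))
           = (\<Sum>k=0..n. a ^ (n - k) / fact (n - k) * (b ^ Suc k / fact (Suc k)))"
    by (subst sum.atLeastAtMost_rev) (auto intro!: sum.cong simp: Suc_diff_le)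
  finally show ?thesis by (simp add: binom_tail_def diff_divide_distrib)
qed

lemma neg_ln_power_over_fact_deriv:
  fixes z :: real
  assumes "z > 0"
  shows "((\<lambda>z. (- ln z) ^ p / fact p) has_field_derivative
           (if p = 0 then 0 else - ((- ln z) ^ (p - 1) / fact (p - 1) / z))) (at z)"
proof (cases p)
  case (Suc q)
  have "((\<lambda>z. - ln z) has_field_derivative - (1 / z)) (at z)"
    by (rule DERIV_minus[OF DERIV_ln_divide[OF assms]])
  from power_over_fact_deriv[OF this, of q] show ?thesis
    using Suc by (simp add: divide_inverse)
qed simp

(* The left-hand side of the theorem as a function of z (at z = 1/2, -ln z = ln 2). *)
definition Lsum :: "nat \<Rightarrow> real \<Rightarrow> real" where
  "Lsum n z = (\<Sum>k=0..n. \<Sum>p=0..n-k. (- ln z) ^ p / fact p * Li_ones (n - k + 2 - p) k z)"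

(* Differentiating the inner sum over p telescopes: the derivative of the logarithmic
   factor of term p cancels the derivative of the polylogarithm in term p - 1, leaving only
   the Li_{1,{1}_k} contribution of the last term. *)
lemma Lsum_inner_deriv:
  assumes z: "0 < z" "z < 1"
  shows "((\<lambda>z. \<Sum>p=0..M. (- ln z) ^ p / fact p * Li_ones (M + 2 - p) k z) has_field_derivative
          (- ln z) ^ M / fact M * Li_ones 1 k z / z) (at z)"
proof -
  define g where "g p = (- ln z) ^ p / fact p * Li_ones (M + 1 - p) k z / z" for p
  have "((\<lambda>z. (- ln z) ^ p / fact p * Li_ones (M + 2 - p) k z) has_field_derivative
          g p - (if p = 0 then 0 else g (p - 1))) (at z)" if "p \<le> M" for p
  proof -
    have "(Li_ones (M + 2 - p) k has_field_derivative Li_ones (M + 1 - p) k z / z) (at z)"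
      using Li_ones_deriv[of "M + 1 - p" z k] that z by (simp add: Suc_diff_le)
    from DERIV_mult[OF neg_ln_power_over_fact_deriv[OF z(1), of p] this]
    show ?thesis by (rule DERIV_cong) (cases p, auto simp: g_def mult_ac)
  qed
  then have "((\<lambda>z. \<Sum>p=0..M. (- ln z) ^ p / fact p * Li_ones (M + 2 - p) k z) has_field_derivative
      (\<Sum>p=0..M. g p - (if p = 0 then 0 else g (p - 1)))) (at z)"
    by (intro DERIV_sum) auto
  then show ?thesis by (simp only: sum_telescope_shift) (simp add: g_def)
qed

(* With the closed form of Li_{1,{1}_k}, the derivative of Lsum becomes a binomial sum in
   a = -ln z and b = -ln(1 - z). *)
lemma Lsum_deriv:
  assumes z: "0 < z" "z < 1"
  shows "(Lsum n has_field_derivative binom_tail n (- ln z) (- ln (1 - z)) / z) (at z)"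
proof -
  have "(Lsum n has_field_derivative
          (\<Sum>k=0..n. (- ln z) ^ (n - k) / fact (n - k) * Li_ones 1 k z / z)) (at z)"
    unfolding Lsum_def[abs_def] by (intro DERIV_sum Lsum_inner_deriv z)
  also have "(\<Sum>k=0..n. (- ln z) ^ (n - k) / fact (n - k) * Li_ones 1 k z / z)
           = binom_tail n (- ln z) (- ln (1 - z)) / z"
    unfolding binom_tail_eq_sum sum_divide_distrib
    using z Li_one_closed_form[of z] by (intro sum.cong refl) simp
  finally show ?thesis .
qed

definition corr :: "nat \<Rightarrow> real \<Rightarrow> real" where
  "corr n z = (- ln z) ^ Suc (Suc n) / fact (Suc (Suc n))
             + (- ln (1 - z)) ^ Suc (Suc n) / fact (Suc (Suc n))
             - (- ln z + - ln (1 - z)) ^ Suc (Suc n) / fact (Suc (Suc n))"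

lemma corr_deriv:
  assumes z: "0 < z" "z < 1"
  shows "(corr n has_field_derivative
           binom_tail n (- ln z) (- ln (1 - z)) / z - binom_tail n (- ln (1 - z)) (- ln z) / (1 - z))
         (at z)"
proof -
  define a b where "a = - ln z" and "b = - ln (1 - z)"
  have da: "((\<lambda>z. - ln z) has_field_derivative - (1 / z)) (at z)"
    by (rule DERIV_minus[OF DERIV_ln_divide[OF z(1)]])
  have db: "((\<lambda>z. - ln (1 - z)) has_field_derivative 1 / (1 - z)) (at z)"
    using z by (auto intro!: derivative_eq_intros simp: field_simps)
  have "(corr n has_field_derivative
          a ^ Suc n / fact (Suc n) * (- (1 / z)) + b ^ Suc n / fact (Suc n) * (1 / (1 - z))
          - (a + b) ^ Suc n / fact (Suc n) * (- (1 / z) + 1 / (1 - z))) (at z)"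
    unfolding corr_def[abs_def] a_def b_def
    by (intro DERIV_diff DERIV_add power_over_fact_deriv da db)
  moreover have "X / F * (- (1 / z)) + Y / F * (1 / (1 - z)) - U / F * (- (1 / z) + 1 / (1 - z))
      = (U - X) / F / z - (U - Y) / F / (1 - z)" for X Y U F :: real
    by (simp add: diff_divide_distrib algebra_simps)
  ultimately show ?thesis
    unfolding binom_tail_def a_def[symmetric] b_def[symmetric] by (simp add: add.commute)
qed

lemma reflection_deriv:
  assumes z: "0 < z" "z < 1"
  shows "((\<lambda>z. Lsum n z + Lsum n (1 - z) - corr n z) has_field_derivative 0) (at z)"
proof -
  have "((\<lambda>z. Lsum n (1 - z)) has_field_derivative
          binom_tail n (- ln (1 - z)) (- ln (1 - (1 - z))) / (1 - z) * (- 1)) (at z)"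
    using z by (intro DERIV_chain2[OF Lsum_deriv] derivative_eq_intros) auto
  from DERIV_diff[OF DERIV_add[OF Lsum_deriv[OF z] this] corr_deriv[OF z]] show ?thesis
    by (rule DERIV_cong) simp
qed

(* Boundary behaviour as z -> 0+: the logarithmic factors are killed by Li(z) = O(z), the
   reflected sum tends to the multiple zeta values (only p = 0 survives), and corr vanishes. *)
lemma Lsum_tendsto_0: "(Lsum n \<longlongrightarrow> 0) (at_right 0)"
  unfolding Lsum_def[abs_def]
proof (intro tendsto_null_sum)
  fix k p assume "k \<in> {0..n}" "p \<in> {0..n - k}"
  then have m: "n - k + 2 - p \<ge> 2" by simp
  define L where "L = Li_ones (n - k + 2 - p) k"
  have upper: "((\<lambda>z. (- ln z) ^ p / fact p * (z * L 1)) \<longlongrightarrow> 0) (at_right 0)"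
    by real_asymp
  have "\<forall>\<^sub>F z in at_right 0. 0 \<le> (- ln z) ^ p / fact p * L z \<and>
                               (- ln z) ^ p / fact p * L z \<le> (- ln z) ^ p / fact p * (z * L 1)"
    using eventually_at_right_real[OF zero_less_one]
  proof eventually_elim
    case (elim z)
    then have "- ln z \<ge> 0" "0 \<le> L z" "L z \<le> z * L 1"
      using Li_ones_bounds[OF m, of z k] by (auto simp: L_def)
    then show ?case by (auto intro!: divide_right_mono mult_left_mono)
  qed
  then show "((\<lambda>z. (- ln z) ^ p / fact p * L z) \<longlongrightarrow> 0) (at_right 0)"
    by (intro tendsto_sandwich[OF _ _ tendsto_const upper]) (auto elim: eventually_mono)
qed

lemma Lsum_reflect_tendsto:
  "((\<lambda>z. Lsum n (1 - z)) \<longlongrightarrow> (\<Sum>k=0..n. Li_ones (n - k + 2) k 1)) (at_right 0)"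
proof -
  have "((\<lambda>z. Lsum n (1 - z)) \<longlongrightarrow>
          (\<Sum>k=0..n. \<Sum>p=0..n-k. 0 ^ p / fact p * Li_ones (n - k + 2 - p) k 1)) (at_right 0)"
    unfolding Lsum_def
  proof (intro tendsto_sum tendsto_mult tendsto_divide tendsto_power Li_ones_reflect_tendsto)
    show "((\<lambda>z::real. - ln (1 - z)) \<longlongrightarrow> 0) (at_right 0)"
      by real_asymp
  qed auto
  then show ?thesis by (simp add: power_0_left sum.atLeast_Suc_atMost)
qed

lemma corr_tendsto_0: "(corr n \<longlongrightarrow> 0) (at_right 0)"
proof -
  have corr_eq: "corr n z = (- ln (1 - z)) ^ Suc (Suc n) / fact (Suc (Suc n))
      - (\<Sum>k=0..Suc n. (- ln z) ^ (Suc n - k) / fact (Suc n - k)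
                         * ((- ln (1 - z)) ^ Suc k / fact (Suc k)))" for z
    unfolding binom_tail_eq_sum[symmetric] by (simp add: corr_def binom_tail_def diff_divide_distrib)
  have lead: "((\<lambda>z::real. (- ln (1 - z)) ^ Suc (Suc n) / fact (Suc (Suc n))) \<longlongrightarrow> 0)
      (at_right 0)"
    by real_asymp
  have terms: "((\<lambda>z::real. (- ln z) ^ (Suc n - k) / fact (Suc n - k)
                 * ((- ln (1 - z)) ^ Suc k / fact (Suc k))) \<longlongrightarrow> 0) (at_right 0)" for k
    by real_asymp
  have "(corr n \<longlongrightarrow> 0 - 0) (at_right 0)"
    unfolding corr_eq[abs_def] by (intro tendsto_diff lead tendsto_null_sum terms)
  then show ?thesis by simp
qed

lemma reflection_identity:
  assumes z: "0 < z" "z < 1"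
  shows "Lsum n z + Lsum n (1 - z) - corr n z = (\<Sum>k=0..n. Li_ones (n - k + 2) k 1)"
proof -
  define \<Phi> where "\<Phi> z = Lsum n z + Lsum n (1 - z) - corr n z" for z
  obtain C where C: "\<And>x. x \<in> {0<..<1} \<Longrightarrow> \<Phi> x = C"
    using has_field_derivative_zero_constant[of "{0<..<1}" \<Phi>] reflection_deriv
    unfolding \<Phi>_def by (force intro: has_field_derivative_at_within)
  have "(\<Phi> \<longlongrightarrow> 0 + (\<Sum>k=0..n. Li_ones (n - k + 2) k 1) - 0) (at_right 0)"
    unfolding \<Phi>_def[abs_def]
    by (intro tendsto_diff tendsto_add Lsum_tendsto_0 Lsum_reflect_tendsto corr_tendsto_0)
  moreover have "\<forall>\<^sub>F x in at_right 0. \<Phi> x = C"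
    using eventually_at_right_real[OF zero_less_one] by eventually_elim (simp add: C)
  ultimately have "((\<lambda>_. C) \<longlongrightarrow> (\<Sum>k=0..n. Li_ones (n - k + 2) k 1)) (at_right (0::real))"
    by (simp add: tendsto_cong)
  then have "C = (\<Sum>k=0..n. Li_ones (n - k + 2) k 1)"
    by (simp add: tendsto_const_iff)
  then show ?thesis using C[of z] z by (simp add: \<Phi>_def)
qed

lemma corr_half:
  "corr n (1/2) = (2 - 2 ^ Suc (Suc n)) * ln 2 ^ Suc (Suc n) / fact (Suc (Suc n))"
proof -
  have "- ln (1/2 :: real) = ln 2" "- ln (1 - 1/2 :: real) = ln 2" by (simp_all add: ln_div)
  then show ?thesis
    unfolding corr_def by (simp add: mult_2[symmetric] power_mult_distrib left_diff_distrib
        diff_divide_distrib add_divide_distrib del: power_Suc)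
qed

theorem corollary7:
  fixes n :: nat
  shows "(\<Sum>k=0..n. \<Sum>p=0..n-k. ln 2 ^ p / fact p *
            mpolylog ((n - k + 2 - p) # replicate k 1) (1/2))
         = (1 - 2 ^ (n+1)) / fact (n+2) * ln 2 ^ (n+2)
           + 1/2 * (\<Sum>k=0..n. mzeta ((n - k + 2) # replicate k 1))"
proof -
  have lhs: "(\<Sum>k=0..n. \<Sum>p=0..n-k. ln 2 ^ p / fact p *
               mpolylog ((n - k + 2 - p) # replicate k 1) (1/2)) = Lsum n (1/2)"
    unfolding Lsum_def by (intro sum.cong refl, subst mpolylog_eq_Li_ones) (auto simp: ln_div)
  have zeta: "(\<Sum>k=0..n. mzeta ((n - k + 2) # replicate k 1)) = (\<Sum>k=0..n. Li_ones (n - k + 2) k 1)"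
    by (intro sum.cong refl, subst mzeta_eq_Li_ones) auto
  have "2 * Lsum n (1/2) - corr n (1/2) = (\<Sum>k=0..n. Li_ones (n - k + 2) k 1)"
    using reflection_identity[of "1/2" n] by simp
  then have "Lsum n (1/2) = corr n (1/2) / 2 + 1/2 * (\<Sum>k=0..n. Li_ones (n - k + 2) k 1)"
    by linarith
  also have "corr n (1/2) / 2 = (1 - 2 ^ (n+1)) / fact (n+2) * ln 2 ^ (n+2)"
    unfolding corr_half add_2_eq_Suc' by (simp add: divide_simps)
  finally show ?thesis unfolding lhs zeta .
qed

end
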